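(* Let $P$ and $Q$ be finitely generated graded rank one projective right $A$-modules, given as graded submodules of $Q_{\mathrm{gr}}(A)$. Then every homomorphism $P\to Q$ in $\operatorname{gr}A$ is given by left multiplication by some element of $\Bbbk(z)$, and $\operatorname{Hom}_{\operatorname{gr}A}(P,Q)$ is a free left $\Bbbk[z]$-module of rank one.
   Context: $\Bbbk$ algebraically closed of characteristic $0$; $\sigma(z)=z+1$. For $\alpha\in\Bbbk$, $f=z(z+\alpha)$, $A=A(f)$ generated by $\Bbbk[z],x,y$ with $xz=(z+1)x$, $yz=(z-1)y$, $xy=f$, $yx=\sigma^{-1}(f)$, graded by $\deg x=1,\deg y=-1,\deg z=0$; $\operatorname{gr}A$: finitely generated graded right $A$-modules with degree-$0$ maps. $Q_{\mathrm{gr}}(A)=\Bbbk(z)[x,x^{-1};\sigma]$ is the graded quotient ring. A rank one graded projective module is a nonzero finitely generated graded projective right $A$-module isomorphic to a graded submodule of $Q_{\mathrm{gr}}(A)$. $\operatorname{Hom}_{\operatorname{gr}A}(P,Q)$ is a left $\Bbbk[z]$-module via left multiplication of $\Bbbk[z]\subseteq\Bbbk(z)$ on the multiplier. *)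

theory Defs
  imports "HOL-Computational_Algebra.Polynomial_Factorial" "HOL-Library.Function_Algebras"
begin

type_synonym 'k rf = "'k poly fract"

text \<open>Elements of the graded quotient ring Q_gr(A) = k(z)[x,x^-1;sigma]: a function
  n |-> coefficient of x^n (finitely supported), i.e. u = sum_n u(n) x^n.\<close>
type_synonym 'k qgr = "int \<Rightarrow> 'k rf"

definition Qgr :: "'k::field qgr set" where
  "Qgr = {u. finite {n. u n \<noteq> 0}}"

text \<open>sigma^m on k(z): z |-> z + m, i.e. p(z)/q(z) |-> p(z+m)/q(z+m).\<close>
definition shiftp :: "int \<Rightarrow> 'k::field_char_0 poly \<Rightarrow> 'k poly" where
  "shiftp m p = pcompose p [:of_int m, 1:]"

definition sig :: "int \<Rightarrow> 'k::field_char_0 rf \<Rightarrow> 'k rf" where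
  "sig m r = (let (p, q) = (SOME (p, q). q \<noteq> 0 \<and> r = Fract p q)
              in Fract (shiftp m p) (shiftp m q))"

text \<open>Multiplication in Q_gr: (a x^m)(b x^n) = a sigma^m(b) x^(m+n).\<close>
definition qmul :: "'k::field_char_0 qgr \<Rightarrow> 'k qgr \<Rightarrow> 'k qgr" where
  "qmul u v = (\<lambda>n. \<Sum>m\<in>{m. u m \<noteq> 0}. u m * sig m (v (n - m)))"

definition hel :: "'k::field rf \<Rightarrow> int \<Rightarrow> 'k qgr" where
  "hel c n = (\<lambda>k. if k = n then c else 0)"

definition fpol :: "'k::field_char_0 \<Rightarrow> 'k poly" where
  "fpol \<alpha> = [:0, \<alpha>, 1:]"

definition xq :: "'k::field_char_0 qgr" where "xq = hel 1 1"

text \<open>y = x^-1 f = sigma^-1(f) x^-1 (so that xy = f and yx = sigma^-1(f)).\<close>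
definition yq :: "'k::field_char_0 \<Rightarrow> 'k qgr" where
  "yq \<alpha> = hel (sig (-1) (to_fract (fpol \<alpha>))) (-1)"

inductive_set Aset :: "'k::field_char_0 \<Rightarrow> 'k qgr set" for \<alpha> :: 'k where
  poly: "hel (to_fract p) 0 \<in> Aset \<alpha>"
| gen_x: "xq \<in> Aset \<alpha>"
| gen_y: "yq \<alpha> \<in> Aset \<alpha>"
| add: "a \<in> Aset \<alpha> \<Longrightarrow> b \<in> Aset \<alpha> \<Longrightarrow> a + b \<in> Aset \<alpha>"
| mul: "a \<in> Aset \<alpha> \<Longrightarrow> b \<in> Aset \<alpha> \<Longrightarrow> qmul a b \<in> Aset \<alpha>"

text \<open>u is homogeneous of degree n (0 is homogeneous of every degree).\<close>
definition is_hom :: "int \<Rightarrow> 'k::field qgr \<Rightarrow> bool" where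
  "is_hom n u \<longleftrightarrow> (\<forall>k. k \<noteq> n \<longrightarrow> u k = 0)"

definition grsub :: "'k::field_char_0 \<Rightarrow> 'k qgr set \<Rightarrow> bool" where
  "grsub \<alpha> P \<longleftrightarrow> P \<subseteq> Qgr \<and> 0 \<in> P \<and> (\<forall>u\<in>P. \<forall>v\<in>P. u + v \<in> P)
     \<and> (\<forall>u\<in>P. \<forall>a\<in>Aset \<alpha>. qmul u a \<in> P) \<and> (\<forall>u\<in>P. \<forall>n. hel (u n) n \<in> P)"

definition fin_gen :: "'k::field_char_0 \<Rightarrow> 'k qgr set \<Rightarrow> bool" where
  "fin_gen \<alpha> P \<longleftrightarrow> (\<exists>G. finite G \<and> G \<subseteq> P \<and>
     P = {(\<Sum>g\<in>G. qmul g (c g)) | c. \<forall>g\<in>G. c g \<in> Aset \<alpha>})"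

text \<open>Degree-0 right A-module map phi : M -> N between graded right A-modules,
  each given by a carrier, a right action of A and a homogeneity predicate.\<close>
definition grAmap ::
  "'k::field_char_0 \<Rightarrow> ('m::plus \<Rightarrow> 'k qgr \<Rightarrow> 'm) \<Rightarrow> (int \<Rightarrow> 'm \<Rightarrow> bool) \<Rightarrow> 'm set \<Rightarrow>
   ('n::plus \<Rightarrow> 'k qgr \<Rightarrow> 'n) \<Rightarrow> (int \<Rightarrow> 'n \<Rightarrow> bool) \<Rightarrow> 'n set \<Rightarrow> ('m \<Rightarrow> 'n) \<Rightarrow> bool" where
  "grAmap \<alpha> actM homM M actN homN N \<phi> \<longleftrightarrow>
     (\<forall>u\<in>M. \<phi> u \<in> N) \<and> (\<forall>u\<in>M. \<forall>v\<in>M. \<phi> (u + v) = \<phi> u + \<phi> v)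
     \<and> (\<forall>u\<in>M. \<forall>a\<in>Aset \<alpha>. \<phi> (actM u a) = actN (\<phi> u) a)
     \<and> (\<forall>u\<in>M. \<forall>n. homM n u \<longrightarrow> homN n (\<phi> u))"

text \<open>Graded free module of finite rank m: direct sum of the shifted copies
  x^(e i) A of A (x^e A is isomorphic to the shift A(-e) in gr A).\<close>
definition Free :: "'k::field_char_0 \<Rightarrow> nat \<Rightarrow> (nat \<Rightarrow> int) \<Rightarrow> (nat \<Rightarrow> 'k qgr) set" where
  "Free \<alpha> m e = {w. (\<forall>i<m. w i \<in> qmul (hel 1 (e i)) ` Aset \<alpha>) \<and> (\<forall>i\<ge>m. w i = 0)}"

definition actF :: "(nat \<Rightarrow> 'k::field_char_0 qgr) \<Rightarrow> 'k qgr \<Rightarrow> (nat \<Rightarrow> 'k qgr)" where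
  "actF w a = (\<lambda>i. qmul (w i) a)"

definition homF :: "int \<Rightarrow> (nat \<Rightarrow> 'k::field qgr) \<Rightarrow> bool" where
  "homF n w \<longleftrightarrow> (\<forall>i. is_hom n (w i))"

text \<open>Projective in gr A: a retract (direct summand) of a f.g. graded free module.\<close>
definition gr_projective :: "'k::field_char_0 \<Rightarrow> 'k qgr set \<Rightarrow> bool" where
  "gr_projective \<alpha> P \<longleftrightarrow> (\<exists>m e s \<pi>.
      grAmap \<alpha> qmul is_hom P actF homF (Free \<alpha> m e) s
    \<and> grAmap \<alpha> actF homF (Free \<alpha> m e) qmul is_hom P \<pi>
    \<and> (\<forall>u\<in>P. \<pi> (s u) = u))"

definition rank_one_proj :: "'k::field_char_0 \<Rightarrow> 'k qgr set \<Rightarrow> bool" where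
  "rank_one_proj \<alpha> P \<longleftrightarrow> grsub \<alpha> P \<and> P \<noteq> {0} \<and> fin_gen \<alpha> P \<and> gr_projective \<alpha> P"

definition HomGr :: "'k::field_char_0 \<Rightarrow> 'k qgr set \<Rightarrow> 'k qgr set \<Rightarrow> ('k qgr \<Rightarrow> 'k qgr) set" where
  "HomGr \<alpha> P Q = {\<phi>. grAmap \<alpha> qmul is_hom P qmul is_hom Q \<phi>}"

end

theory Submission
  imports Defs
begin

text \<open>A degree-0 map \<open>\<phi> : P \<rightarrow> Q\<close> commutes with right multiplication by A. Any two nonzero
  homogeneous elements \<open>r x\<^sup>m\<close>, \<open>s x\<^sup>n\<close> of P have a common nonzero right multiple, because A contains
  nonzero elements of every degree and k(z) is the fraction field of k[z]; hence \<open>\<phi>\<close> multiplies every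
  homogeneous component by the same \<open>\<theta> \<in> k(z)\<close>. So Hom(P, Q) is the k[z]-module of multipliers
  \<open>{\<theta>. \<theta>P \<subseteq> Q}\<close>. It is nonzero because P is finitely generated and Q contains nonzero elements of
  every degree, and its denominators are bounded because Q is finitely generated over A, whose
  coefficients are polynomials. A fractional ideal of the PID k[z] is principal, which gives
  freeness of rank one.\<close>

section \<open>Fractional ideals of a Euclidean ring\<close>

lemma common_denominator:
  fixes S :: "'a::idom fract set"
  assumes "finite S"
  obtains D where "D \<noteq> 0" "\<And>x. x \<in> S \<Longrightarrow> to_fract D * x \<in> range to_fract"
  using assms
proof (induction S arbitrary: thesis rule: finite_induct)
  case empty
  show ?case by (rule empty.prems[of 1]) auto
next
  case (insert x F)
  obtain D where D: "D \<noteq> 0" "\<And>y. y \<in> F \<Longrightarrow> to_fract D * y \<in> range to_fract"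
    using insert.IH by blast
  obtain a b where x: "x = Fract a b" "b \<noteq> 0" by (cases x)
  have "to_fract (D * b) * y \<in> range to_fract" if y: "y \<in> insert x F" for y
  proof (cases "y = x")
    case True
    then have "to_fract (D * b) * y = to_fract (D * a)"
      using x by (simp add: Fract_conv_to_fract)
    then show ?thesis by (metis rangeI)
  next
    case False
    then obtain p where "to_fract D * y = to_fract p" using D(2) y by blast
    then have "to_fract (D * b) * y = to_fract (p * b)" by (simp add: algebra_simps)
    then show ?thesis by (metis rangeI)
  qed
  then show ?case using D(1) x(2) by (intro insert.prems[of "D * b"]) auto
qed

lemma fractional_ideal_principal:
  fixes M :: "'a::euclidean_ring fract set"
  assumes add: "\<And>x y. x \<in> M \<Longrightarrow> y \<in> M \<Longrightarrow> x + y \<in> M"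
    and smult: "\<And>c x. x \<in> M \<Longrightarrow> to_fract c * x \<in> M"
    and nonzero: "x1 \<in> M" "x1 \<noteq> 0"
    and denom: "D \<noteq> 0" "\<And>x. x \<in> M \<Longrightarrow> to_fract D * x \<in> range to_fract"
  obtains g where "g \<in> M" "g \<noteq> 0" "\<And>x. x \<in> M \<Longrightarrow> \<exists>c. x = to_fract c * g"
proof -
  define J where "J = {p. p \<noteq> 0 \<and> to_fract p \<in> (\<lambda>x. to_fract D * x) ` M}"
  obtain p1 where p1: "to_fract D * x1 = to_fract p1" using denom(2)[OF nonzero(1)] by auto
  moreover from this have "p1 \<noteq> 0" using denom(1) nonzero(2) by auto
  ultimately have "p1 \<in> J" using nonzero(1) unfolding J_def by force
  then obtain p0 where p0: "p0 \<in> J" and minimal: "\<And>p. p \<in> J \<Longrightarrow> euclidean_size p0 \<le> euclidean_size p"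
    using ex_has_least_nat[of "\<lambda>p. p \<in> J" p1 euclidean_size] by blast
  obtain g where g: "g \<in> M" "to_fract D * g = to_fract p0" "p0 \<noteq> 0"
    using p0 unfolding J_def by auto
  have "\<exists>c. x = to_fract c * g" if x: "x \<in> M" for x
  proof -
    obtain p where p: "to_fract D * x = to_fract p" using denom(2)[OF x] by auto
    have "x + to_fract (- (p div p0)) * g \<in> M" by (intro add smult x g(1))
    moreover have "to_fract D * (x + to_fract (- (p div p0)) * g) = to_fract (p mod p0)"
      using p g(2) by (simp add: algebra_simps flip: minus_div_mult_eq_mod)
    ultimately have "p mod p0 = 0"
      using minimal[of "p mod p0"] mod_size_less[OF g(3), of p] unfolding J_def by force
    then have "to_fract D * x = to_fract D * (to_fract (p div p0) * g)"
      using p g(2) by (metis mult.left_commute div_mult_mod_eq add_0_right to_fract_mult)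
    then show ?thesis using denom(1) by auto
  qed
  moreover have "g \<noteq> 0" using g by auto
  ultimately show thesis using that g(1) by blast
qed

lemma shiftp_mult: "shiftp m (p * q) = shiftp m p * shiftp m q"
  by (simp add: shiftp_def pcompose_mult)

lemma shiftp_0 [simp]: "shiftp m 0 = 0"
  by (simp add: shiftp_def)

lemma shiftp_1 [simp]: "shiftp m 1 = 1"
  by (simp add: shiftp_def pcompose_1)

lemma shiftp_shiftp: "shiftp m (shiftp n p) = shiftp (m + n) p"
proof -
  have "pcompose [:of_int n, 1:] [:of_int m, 1:] = [:of_int (m + n), 1::'a:]"
    by (simp add: pcompose_pCons algebra_simps)
  then show ?thesis unfolding shiftp_def by (metis pcompose_assoc)
qed

lemma shiftp_0_left [simp]: "shiftp 0 p = p"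
  by (simp add: shiftp_def)

lemma shiftp_shiftp_uminus [simp]: "shiftp m (shiftp (- m) p) = p"
  by (simp add: shiftp_shiftp)

lemma shiftp_eq_0_iff [simp]: "shiftp m p = 0 \<longleftrightarrow> p = 0"
  unfolding shiftp_def by (rule pcompose_eq_0_iff) simp

text \<open>The definition of sig picks an arbitrary representing fraction; the result does not depend
  on the choice because shifting is a ring endomorphism of k[z].\<close>

lemma sig_Fract:
  assumes "q \<noteq> 0"
  shows "sig m (Fract p q) = Fract (shiftp m p) (shiftp m q)"
proof -
  define pq where "pq = (SOME (p', q'). q' \<noteq> 0 \<and> Fract p q = Fract p' q')"
  have "(\<lambda>(p', q'). q' \<noteq> 0 \<and> Fract p q = Fract p' q') pq"
    unfolding pq_def by (rule someI_ex) (use assms in auto)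
  then obtain p' q' where pq: "pq = (p', q')" "q' \<noteq> 0" "Fract p q = Fract p' q'"
    by (cases pq) auto
  then have "p * q' = p' * q" using assms by (simp add: eq_fract)
  then have "shiftp m p * shiftp m q' = shiftp m p' * shiftp m q"
    by (simp flip: shiftp_mult)
  then have "Fract (shiftp m p') (shiftp m q') = Fract (shiftp m p) (shiftp m q)"
    using assms pq(2) by (simp add: eq_fract)
  then show ?thesis unfolding sig_def pq_def[symmetric] pq(1) by simp
qed

lemma sig_to_fract [simp]: "sig m (to_fract p) = to_fract (shiftp m p)"
  by (simp add: to_fract_def sig_Fract)

lemma sig_0 [simp]: "sig m 0 = 0"
  using sig_to_fract[of m 0] by simp

lemma sig_1 [simp]: "sig m 1 = 1"
  using sig_to_fract[of m 1] by simp

lemma sig_0_left [simp]: "sig 0 a = a"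
  by (cases a) (simp add: sig_Fract)

lemma sig_mult: "sig m (a * b) = sig m a * sig m b"
  by (cases a; cases b) (simp add: sig_Fract shiftp_mult)

lemma sig_eq_0_iff [simp]: "sig m a = 0 \<longleftrightarrow> a = 0"
  by (cases a) (simp add: sig_Fract eq_fract Zero_fract_def)

lemma hel_0 [simp]: "hel 0 n = 0"
  by (auto simp: hel_def)

lemma hel_eq_iff [simp]: "hel a n = hel b n \<longleftrightarrow> a = b"
  by (metis hel_def)

lemma hel_mult: "hel (\<theta> * a) n = (\<lambda>k. \<theta> * hel a n k)"
  by (auto simp: hel_def)

lemma is_hom_hel: "is_hom n (hel a n)"
  by (auto simp: is_hom_def hel_def)

lemma is_hom_eq_hel: "is_hom n u \<Longrightarrow> u = hel (u n) n"
  by (auto simp: is_hom_def hel_def fun_eq_iff)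

lemma qmul_hel: "qmul (hel a m) (hel b n) = hel (a * sig m b) (m + n)"
proof (cases "a = 0")
  case False
  then have "{k. hel a m k \<noteq> 0} = {m}" by (auto simp: hel_def)
  then show ?thesis using False by (auto simp: qmul_def hel_def fun_eq_iff)
qed (simp add: qmul_def fun_eq_iff)

lemma qmul_hel_0_left: "qmul (hel \<theta> 0) u = (\<lambda>k. \<theta> * u k)"
proof (cases "\<theta> = 0")
  case False
  then have "{k. hel \<theta> 0 k \<noteq> 0} = {0}" by (auto simp: hel_def)
  then show ?thesis using False by (auto simp: qmul_def hel_def fun_eq_iff)
qed (simp add: qmul_def fun_eq_iff)

lemma qmul_scale_left: "qmul (\<lambda>k. \<theta> * u k) a = (\<lambda>n. \<theta> * qmul u a n)"
proof (cases "\<theta> = 0")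
  case False
  then have "{k. \<theta> * u k \<noteq> 0} = {k. u k \<noteq> 0}" by auto
  then show ?thesis using False by (simp add: qmul_def sum_distrib_left mult.assoc)
qed (simp add: qmul_def fun_eq_iff)

lemma sum_fun_apply: "(\<Sum>i\<in>S. f i) k = (\<Sum>i\<in>S. f i k)"
  by (induction S rule: infinite_finite_induct) auto

lemma scale_sum:
  fixes c :: "'a::semiring_0"
  shows "(\<lambda>k. c * (\<Sum>i\<in>S. f i) k) = (\<Sum>i\<in>S. (\<lambda>k. c * f i k))"
  by (rule ext) (simp add: sum_fun_apply sum_distrib_left)

lemma Qgr_sum_homogeneous_components:
  assumes "u \<in> Qgr"
  shows "u = (\<Sum>n\<in>{n. u n \<noteq> 0}. hel (u n) n)"
proof
  fix k
  have "finite {n. u n \<noteq> 0}" using assms by (simp add: Qgr_def)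
  then show "u k = (\<Sum>n\<in>{n. u n \<noteq> 0}. hel (u n) n) k"
    by (simp add: sum_fun_apply hel_def)
qed

lemma scale_sum_homogeneous_components:
  assumes "u \<in> Qgr"
  shows "(\<lambda>k. \<theta> * u k) = (\<Sum>n\<in>{n. u n \<noteq> 0}. hel (\<theta> * u n) n)"
  by (subst Qgr_sum_homogeneous_components[OF assms]) (simp add: scale_sum hel_mult)

lemma range_to_fract_add: "a \<in> range to_fract \<Longrightarrow> b \<in> range to_fract \<Longrightarrow> a + b \<in> range to_fract"
  by (elim rangeE) (simp flip: to_fract_add)

lemma range_to_fract_mult: "a \<in> range to_fract \<Longrightarrow> b \<in> range to_fract \<Longrightarrow> a * b \<in> range to_fract"
  by (elim rangeE) (simp flip: to_fract_mult)

lemma range_to_fract_sig: "a \<in> range to_fract \<Longrightarrow> sig m a \<in> range to_fract"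
  by auto

lemma range_to_fract_sum:
  "(\<And>i. i \<in> S \<Longrightarrow> f i \<in> range to_fract) \<Longrightarrow> (\<Sum>i\<in>S. f i) \<in> range to_fract"
  by (induction S rule: infinite_finite_induct) (auto intro: range_to_fract_add)

lemma Aset_coeff_polynomial: "a \<in> Aset \<alpha> \<Longrightarrow> a n \<in> range to_fract"
proof (induction a arbitrary: n rule: Aset.induct)
  case (mul a b)
  then show ?case unfolding qmul_def
    by (intro range_to_fract_sum range_to_fract_mult range_to_fract_sig) auto
next
  case gen_x
  show ?case by (simp add: hel_def xq_def) (metis rangeI to_fract_0 to_fract_1)
qed (auto simp: hel_def yq_def intro: range_to_fract_add)

lemma Aset_hel_poly_mult:
  assumes "hel w d \<in> Aset \<alpha>"
  shows "hel (to_fract p * w) d \<in> Aset \<alpha>"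
proof -
  have "qmul (hel (to_fract p) 0) (hel w d) \<in> Aset \<alpha>" using Aset.poly assms by (rule Aset.mul)
  then show ?thesis by (simp add: qmul_hel)
qed

lemma Aset_hel_nonzero: "\<exists>w. w \<noteq> 0 \<and> hel w d \<in> Aset \<alpha>"
proof (cases "d \<ge> 0")
  case True
  then obtain k where d: "d = int k" by (metis nonneg_eq_int)
  have "hel 1 (int k) \<in> Aset \<alpha>"
  proof (induction k)
    case 0
    show ?case using Aset.poly[of 1 \<alpha>] by simp
  next
    case (Suc k)
    have "qmul xq (hel 1 (int k)) \<in> Aset \<alpha>" by (rule Aset.mul[OF Aset.gen_x Suc])
    then show ?case by (simp add: xq_def qmul_hel add.commute)
  qed
  then show ?thesis using d by (intro exI[of _ 1]) auto
next
  case False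
  then obtain k where d: "d = - int k" by (metis nonpos_int_cases not_le less_imp_le)
  have "\<exists>w. w \<noteq> 0 \<and> hel w (- int k) \<in> Aset \<alpha>"
  proof (induction k)
    case 0
    show ?case using Aset.poly[of 1 \<alpha>] by (intro exI[of _ 1]) simp
  next
    case (Suc k)
    then obtain w where w: "w \<noteq> 0" "hel w (- int k) \<in> Aset \<alpha>" by auto
    define w' where "w' = sig (-1) (to_fract (fpol \<alpha>)) * sig (-1) w"
    have "qmul (yq \<alpha>) (hel w (- int k)) \<in> Aset \<alpha>" by (rule Aset.mul[OF Aset.gen_y w(2)])
    moreover have "qmul (yq \<alpha>) (hel w (- int k)) = hel w' (- int (Suc k))"
      by (simp add: yq_def qmul_hel w'_def)
    moreover have "w' \<noteq> 0" using w(1) by (simp add: w'_def fpol_def)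
    ultimately show ?case by auto
  qed
  then show ?thesis using d by simp
qed

lemma grsub_sum:
  assumes M: "grsub \<alpha> M" and f: "\<And>i. i \<in> S \<Longrightarrow> f i \<in> M"
  shows "(\<Sum>i\<in>S. f i) \<in> M"
  using f
proof (induction S rule: infinite_finite_induct)
  case (insert x F)
  have "sum f (insert x F) = f x + sum f F" using insert(1,2) by (rule sum.insert)
  moreover have "f x + sum f F \<in> M" using insert M unfolding grsub_def by blast
  ultimately show ?case by (simp only:)
qed (use M in \<open>simp_all add: grsub_def\<close>)

lemma grsub_hel_component: "grsub \<alpha> M \<Longrightarrow> u \<in> M \<Longrightarrow> hel (u n) n \<in> M"
  by (simp add: grsub_def)

lemma grsub_scale_poly:
  assumes M: "grsub \<alpha> M" and w: "w \<in> M"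
  shows "(\<lambda>k. to_fract c * w k) \<in> M"
proof -
  have "w \<in> Qgr" using M w by (auto simp: grsub_def)
  then have "(\<lambda>k. to_fract c * w k) = (\<Sum>n\<in>{n. w n \<noteq> 0}. hel (to_fract c * w n) n)"
    by (rule scale_sum_homogeneous_components)
  also have "\<dots> \<in> M"
  proof (rule grsub_sum[OF M])
    fix n
    have "qmul (hel (w n) n) (hel (to_fract (shiftp (- n) c)) 0) \<in> M"
      using M grsub_hel_component[OF M w] Aset.poly unfolding grsub_def by blast
    then show "hel (to_fract c * w n) n \<in> M" by (simp add: qmul_hel mult.commute)
  qed
  finally show ?thesis .
qed

lemma grsub_nonzero_hel:
  assumes M: "grsub \<alpha> M" and nonzero: "M \<noteq> {0}"
  obtains r m where "r \<noteq> 0" "hel r m \<in> M"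
proof -
  obtain u where u: "u \<in> M" "u \<noteq> 0" using nonzero M by (auto simp: grsub_def)
  then obtain m where "u m \<noteq> 0" by (auto simp: fun_eq_iff)
  then show thesis using that grsub_hel_component[OF M u(1)] by blast
qed

lemma grsub_hel_every_degree:
  assumes M: "grsub \<alpha> M" and nonzero: "M \<noteq> {0}"
  obtains W where "W \<noteq> 0" "\<And>p. hel (to_fract p * W) n \<in> M"
proof -
  obtain r m where r: "r \<noteq> 0" "hel r m \<in> M" using grsub_nonzero_hel[OF M nonzero] .
  obtain w where w: "w \<noteq> 0" "hel w (n - m) \<in> Aset \<alpha>" using Aset_hel_nonzero by blast
  have W: "hel (to_fract p * (r * sig m w)) n \<in> M" for p
  proof -
    have "qmul (hel r m) (hel (to_fract (shiftp (- m) p) * w) (n - m)) \<in> M"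
      using M r(2) Aset_hel_poly_mult[OF w(2)] by (auto simp: grsub_def)
    then show ?thesis by (simp add: qmul_hel sig_mult algebra_simps)
  qed
  show thesis by (rule that[OF _ W]) (simp add: r(1) w(1))
qed

section \<open>Graded homomorphisms are multiplications by rational functions\<close>

lemma grAmap_zero:
  fixes \<phi> :: "'m::monoid_add \<Rightarrow> 'n::{cancel_semigroup_add, monoid_add}"
  assumes "grAmap \<alpha> actM homM M actN homN N \<phi>" "0 \<in> M"
  shows "\<phi> 0 = 0"
proof -
  have "\<phi> 0 + \<phi> 0 = \<phi> 0 + 0"
    using assms unfolding grAmap_def by (metis add_0 add.right_neutral)
  then show ?thesis by (rule add_left_imp_eq)
qed

lemma grAmap_sum:
  assumes \<phi>: "grAmap \<alpha> qmul is_hom P qmul is_hom Q \<phi>" and P: "grsub \<alpha> P"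
    and f: "\<And>i. i \<in> S \<Longrightarrow> f i \<in> P"
  shows "\<phi> (\<Sum>i\<in>S. f i) = (\<Sum>i\<in>S. \<phi> (f i))"
  using f
proof (induction S rule: infinite_finite_induct)
  case (insert x F)
  have "(\<Sum>i\<in>F. f i) \<in> P" by (rule grsub_sum[OF P]) (use insert in auto)
  then have "\<phi> (f x + sum f F) = \<phi> (f x) + \<phi> (sum f F)"
    using \<phi> insert.prems unfolding grAmap_def by blast
  moreover have "\<phi> (sum f F) = (\<Sum>i\<in>F. \<phi> (f i))" using insert by blast
  ultimately show ?case unfolding sum.insert[OF insert(1,2)] by (simp only:)
qed (use grAmap_zero[OF \<phi>] P in \<open>simp_all add: grsub_def\<close>)

lemma grAmap_hel:
  assumes "grAmap \<alpha> qmul is_hom P qmul is_hom Q \<phi>" "hel s n \<in> P"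
  shows "\<phi> (hel s n) = hel (\<phi> (hel s n) n) n"
  using assms is_hom_hel unfolding grAmap_def by (blast intro: is_hom_eq_hel)

text \<open>A common right multiple of two homogeneous elements is what forces a graded map to scale all
  homogeneous components by the same factor.\<close>

lemma Aset_common_right_multiple:
  assumes r: "r \<noteq> 0"
  obtains a b where "hel a (n - m) \<in> Aset \<alpha>" "hel b 0 \<in> Aset \<alpha>" "b \<noteq> 0"
    "r * sig m a = s * sig n b"
proof -
  obtain w where w: "w \<noteq> 0" "hel w (n - m) \<in> Aset \<alpha>" using Aset_hel_nonzero by blast
  obtain p q where pq: "s / (r * sig m w) = Fract p q" "q \<noteq> 0"
    by (cases "s / (r * sig m w)")
  define a where "a = to_fract (shiftp (- m) p) * w"
  define b where "b = to_fract (shiftp (- n) q)"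
  have "r * (to_fract p * sig m w) = s * to_fract q"
    using pq r w(1) by (simp add: Fract_conv_to_fract field_simps)
  then have "r * sig m a = s * sig n b"
    by (simp add: a_def b_def sig_mult)
  moreover have "hel a (n - m) \<in> Aset \<alpha>" unfolding a_def by (rule Aset_hel_poly_mult[OF w(2)])
  moreover have "hel b 0 \<in> Aset \<alpha>" unfolding b_def by (rule Aset.poly)
  moreover have "b \<noteq> 0" using pq(2) by (simp add: b_def)
  ultimately show thesis using that by blast
qed

lemma grAmap_hel_ratio:
  assumes \<phi>: "grAmap \<alpha> qmul is_hom P qmul is_hom Q \<phi>"
    and r: "r \<noteq> 0" "hel r m \<in> P" and s: "hel s n \<in> P"
  shows "\<phi> (hel s n) = hel (\<phi> (hel r m) m / r * s) n"
proof -
  obtain a b where ab: "hel a (n - m) \<in> Aset \<alpha>" "hel b 0 \<in> Aset \<alpha>" "b \<noteq> 0"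
    "r * sig m a = s * sig n b"
    using Aset_common_right_multiple[OF r(1)] .
  define t0 t where "t0 = \<phi> (hel r m) m" and "t = \<phi> (hel s n) n"
  have \<phi>r: "\<phi> (hel r m) = hel t0 m" and \<phi>s: "\<phi> (hel s n) = hel t n"
    unfolding t0_def t_def using grAmap_hel[OF \<phi> r(2)] grAmap_hel[OF \<phi> s] .
  have action: "\<phi> (qmul u c) = qmul (\<phi> u) c" if "u \<in> P" "c \<in> Aset \<alpha>" for u c
    using \<phi> that unfolding grAmap_def by blast
  have "qmul (\<phi> (hel r m)) (hel a (n - m)) = \<phi> (qmul (hel r m) (hel a (n - m)))"
    using action[OF r(2) ab(1)] by simp
  also have "\<dots> = \<phi> (qmul (hel s n) (hel b 0))"
    by (simp add: qmul_hel ab(4))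
  also have "\<dots> = qmul (\<phi> (hel s n)) (hel b 0)"
    using action[OF s ab(2)] .
  finally have "t * sig n b = t0 * sig m a"
    unfolding \<phi>r \<phi>s by (simp add: qmul_hel)
  then have "(t * r) * sig n b = t0 * (r * sig m a)"
    by (simp add: ac_simps)
  also have "\<dots> = (t0 * s) * sig n b"
    by (simp add: ab(4) ac_simps)
  finally have "(t * r) * sig n b = (t0 * s) * sig n b" .
  then have "t * r = t0 * s" using ab(3) by simp
  then show ?thesis
    using \<phi>s r(1) by (simp add: t0_def field_simps)
qed

lemma grAmap_is_scaling:
  assumes P: "grsub \<alpha> P" "P \<noteq> {0}" and \<phi>: "grAmap \<alpha> qmul is_hom P qmul is_hom Q \<phi>"
  obtains \<theta> where "\<And>u. u \<in> P \<Longrightarrow> \<phi> u = (\<lambda>k. \<theta> * u k)"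
proof -
  obtain r m where r: "r \<noteq> 0" "hel r m \<in> P" using grsub_nonzero_hel[OF P] .
  define \<theta> where "\<theta> = \<phi> (hel r m) m / r"
  have "\<phi> u = (\<lambda>k. \<theta> * u k)" if u: "u \<in> P" for u
  proof -
    have uQ: "u \<in> Qgr" using P(1) u by (auto simp: grsub_def)
    have comp: "hel (u n) n \<in> P" for n by (rule grsub_hel_component[OF P(1) u])
    have "\<phi> u = \<phi> (\<Sum>n\<in>{n. u n \<noteq> 0}. hel (u n) n)"
      using Qgr_sum_homogeneous_components[OF uQ] by simp
    also have "\<dots> = (\<Sum>n\<in>{n. u n \<noteq> 0}. hel (\<theta> * u n) n)"
      using grAmap_sum[OF \<phi> P(1) comp] grAmap_hel_ratio[OF \<phi> r comp] by (simp add: \<theta>_def)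
    also have "\<dots> = (\<lambda>k. \<theta> * u k)"
      by (rule scale_sum_homogeneous_components[OF uQ, symmetric])
    finally show ?thesis .
  qed
  then show thesis by (rule that)
qed

section \<open>The multipliers form a principal fractional ideal\<close>

definition multipliers :: "'k::field qgr set \<Rightarrow> 'k qgr set \<Rightarrow> 'k rf set" where
  "multipliers P Q = {\<theta>. \<forall>u\<in>P. (\<lambda>k. \<theta> * u k) \<in> Q}"

lemma multipliers_add:
  assumes Q: "grsub \<alpha> Q" and "a \<in> multipliers P Q" "b \<in> multipliers P Q"
  shows "a + b \<in> multipliers P Q"
proof -
  have "(\<lambda>k. (a + b) * u k) = (\<lambda>k. a * u k) + (\<lambda>k. b * u k)" for u :: "'a qgr"
    by (simp add: fun_eq_iff distrib_right)
  then show ?thesis using assms unfolding multipliers_def grsub_def by simp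
qed

lemma multipliers_poly_mult:
  assumes Q: "grsub \<alpha> Q" and a: "a \<in> multipliers P Q"
  shows "to_fract c * a \<in> multipliers P Q"
  using grsub_scale_poly[OF Q] a by (simp add: multipliers_def mult.assoc)

lemma scaling_in_HomGr:
  assumes "\<theta> \<in> multipliers P Q"
  shows "qmul (hel \<theta> 0) \<in> HomGr \<alpha> P Q"
  using assms unfolding HomGr_def grAmap_def multipliers_def
  by (auto simp: qmul_hel_0_left qmul_scale_left is_hom_def distrib_left fun_eq_iff)

lemma HomGr_is_scaling:
  assumes "grsub \<alpha> P" "P \<noteq> {0}" "\<phi> \<in> HomGr \<alpha> P Q"
  obtains \<theta> where "\<theta> \<in> multipliers P Q" "\<And>u. u \<in> P \<Longrightarrow> \<phi> u = qmul (hel \<theta> 0) u"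
proof -
  have \<phi>: "grAmap \<alpha> qmul is_hom P qmul is_hom Q \<phi>" using assms(3) by (simp add: HomGr_def)
  obtain \<theta> where \<theta>: "\<And>u. u \<in> P \<Longrightarrow> \<phi> u = (\<lambda>k. \<theta> * u k)"
    using grAmap_is_scaling[OF assms(1,2) \<phi>] by blast
  have "\<theta> \<in> multipliers P Q" using \<phi> \<theta> by (auto simp: multipliers_def grAmap_def)
  then show thesis using that \<theta> by (simp add: qmul_hel_0_left)
qed

lemma scaling_eq_on_iff:
  assumes "u0 \<in> P" "u0 \<noteq> 0"
  shows "(\<forall>u\<in>P. qmul (hel a 0) u = qmul (hel b 0) u) \<longleftrightarrow> a = b"
proof
  assume "\<forall>u\<in>P. qmul (hel a 0) u = qmul (hel b 0) u"
  then have "(\<lambda>k. a * u0 k) = (\<lambda>k. b * u0 k)" using assms(1) by (simp add: qmul_hel_0_left)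
  moreover obtain k where "u0 k \<noteq> 0" using assms(2) by (auto simp: fun_eq_iff)
  ultimately show "a = b" by (metis mult_cancel_right)
qed simp

lemma finite_coefficients:
  assumes "finite G" "G \<subseteq> Qgr"
  shows "finite {h g n | g n. g \<in> G \<and> g n \<noteq> 0}"
proof -
  have "{h g n | g n. g \<in> G \<and> g n \<noteq> 0} = (\<lambda>(g, n). h g n) ` (SIGMA g:G. {n. g n \<noteq> 0})"
    by auto
  then show ?thesis using assms by (auto simp: Qgr_def intro!: finite_SigmaI)
qed

lemma fin_gen_bounded_denominators:
  assumes "fin_gen \<alpha> M" "M \<subseteq> Qgr"
  obtains D where "D \<noteq> 0" "\<And>u n. u \<in> M \<Longrightarrow> to_fract D * u n \<in> range to_fract"
proof -
  obtain G where G: "finite G" "G \<subseteq> M" "M = {(\<Sum>g\<in>G. qmul g (c g)) | c. \<forall>g\<in>G. c g \<in> Aset \<alpha>}"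
    using assms(1) unfolding fin_gen_def by blast
  have GQ: "G \<subseteq> Qgr" using G(2) assms(2) by blast
  obtain D where D: "D \<noteq> 0"
    "\<And>x. x \<in> {g n | g n. g \<in> G \<and> g n \<noteq> 0} \<Longrightarrow> to_fract D * x \<in> range to_fract"
    using common_denominator[OF finite_coefficients[OF G(1) GQ, of "\<lambda>g n. g n"]] by blast
  have "to_fract D * u n \<in> range to_fract" if u: "u \<in> M" for u n
  proof -
    obtain c where u: "u = (\<Sum>g\<in>G. qmul g (c g))" "\<forall>g\<in>G. c g \<in> Aset \<alpha>"
      using u G(3) by blast
    have "to_fract D * u n =
        (\<Sum>g\<in>G. \<Sum>k\<in>{k. g k \<noteq> 0}. (to_fract D * g k) * sig k (c g (n - k)))"
      by (simp add: u(1) sum_fun_apply qmul_def sum_distrib_left mult.assoc)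
    also have "\<dots> \<in> range to_fract"
    proof (intro range_to_fract_sum)
      fix g k assume g: "g \<in> G" and k: "k \<in> {k. g k \<noteq> 0}"
      have "to_fract D * g k \<in> range to_fract" using D(2) g k by blast
      moreover have "c g (n - k) \<in> range to_fract" using u(2) g Aset_coeff_polynomial by blast
      ultimately show "to_fract D * g k * sig k (c g (n - k)) \<in> range to_fract"
        by (rule range_to_fract_mult[OF _ range_to_fract_sig])
    qed
    finally show ?thesis .
  qed
  then show thesis using that D(1) by blast
qed

lemma multipliers_of_generators:
  assumes Q: "grsub \<alpha> Q" and P: "P = {(\<Sum>g\<in>G. qmul g (c g)) | c. \<forall>g\<in>G. c g \<in> Aset \<alpha>}"
    and gen: "\<And>g. g \<in> G \<Longrightarrow> (\<lambda>k. \<theta> * g k) \<in> Q"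
  shows "\<theta> \<in> multipliers P Q"
  unfolding multipliers_def mem_Collect_eq
proof
  fix u assume "u \<in> P"
  then obtain c where u: "u = (\<Sum>g\<in>G. qmul g (c g))" "\<forall>g\<in>G. c g \<in> Aset \<alpha>"
    using P by blast
  have "(\<lambda>k. \<theta> * u k) = (\<Sum>g\<in>G. qmul (\<lambda>k. \<theta> * g k) (c g))"
    by (simp add: u(1) scale_sum qmul_scale_left)
  also have "\<dots> \<in> Q"
    using gen u(2) Q by (intro grsub_sum[OF Q]) (auto simp: grsub_def)
  finally show "(\<lambda>k. \<theta> * u k) \<in> Q" .
qed

lemma multipliers_nonzero:
  assumes P: "grsub \<alpha> P" "fin_gen \<alpha> P" and Q: "grsub \<alpha> Q" "Q \<noteq> {0}"
  obtains \<theta> where "\<theta> \<in> multipliers P Q" "\<theta> \<noteq> 0"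
proof -
  obtain G where G: "finite G" "G \<subseteq> P" "P = {(\<Sum>g\<in>G. qmul g (c g)) | c. \<forall>g\<in>G. c g \<in> Aset \<alpha>}"
    using P(2) unfolding fin_gen_def by blast
  have GQ: "G \<subseteq> Qgr" using G(2) P(1) by (auto simp: grsub_def)
  have "\<forall>n. \<exists>W. W \<noteq> 0 \<and> (\<forall>p. hel (to_fract p * W) n \<in> Q)"
  proof
    fix n
    show "\<exists>W. W \<noteq> 0 \<and> (\<forall>p. hel (to_fract p * W) n \<in> Q)"
      using grsub_hel_every_degree[OF Q, of n] by blast
  qed
  from choice[OF this] obtain W where "\<forall>n. W n \<noteq> 0 \<and> (\<forall>p. hel (to_fract p * W n) n \<in> Q)" ..
  then have W: "\<And>n. W n \<noteq> 0" "\<And>n p. hel (to_fract p * W n) n \<in> Q" by simp_all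
  obtain D where D: "D \<noteq> 0"
    "\<And>x. x \<in> {g n / W n | g n. g \<in> G \<and> g n \<noteq> 0} \<Longrightarrow> to_fract D * x \<in> range to_fract"
    using common_denominator[OF finite_coefficients[OF G(1) GQ, of "\<lambda>g n. g n / W n"]] by blast
  have "(\<lambda>k. to_fract D * g k) \<in> Q" if g: "g \<in> G" for g
  proof -
    have "hel (to_fract D * g n) n \<in> Q" if "g n \<noteq> 0" for n
    proof -
      have "g n / W n \<in> {g n / W n | g n. g \<in> G \<and> g n \<noteq> 0}" using g that by blast
      then obtain p where "to_fract D * (g n / W n) = to_fract p" using D(2) by blast
      then have "to_fract D * g n = to_fract p * W n" using W(1)[of n] by (simp add: field_simps)
      then show ?thesis using W(2) by simp
    qed
    then have "(\<Sum>n\<in>{n. g n \<noteq> 0}. hel (to_fract D * g n) n) \<in> Q"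
      by (intro grsub_sum[OF Q(1)]) simp
    moreover have "g \<in> Qgr" using GQ g by blast
    ultimately show ?thesis by (simp only: scale_sum_homogeneous_components)
  qed
  then have "to_fract D \<in> multipliers P Q" by (rule multipliers_of_generators[OF Q(1) G(3)])
  then show thesis by (rule that) (simp add: D(1))
qed

lemma multipliers_bounded_denominators:
  assumes P: "grsub \<alpha> P" "P \<noteq> {0}" and Q: "grsub \<alpha> Q" "fin_gen \<alpha> Q"
  obtains D where "D \<noteq> 0" "\<And>\<theta>. \<theta> \<in> multipliers P Q \<Longrightarrow> to_fract D * \<theta> \<in> range to_fract"
proof -
  obtain r m where r: "r \<noteq> 0" "hel r m \<in> P" using grsub_nonzero_hel[OF P] .
  have "Q \<subseteq> Qgr" using Q(1) by (simp add: grsub_def)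
  then obtain D where D: "D \<noteq> 0" "\<And>u n. u \<in> Q \<Longrightarrow> to_fract D * u n \<in> range to_fract"
    using fin_gen_bounded_denominators[OF Q(2)] by blast
  obtain a b where ab: "r = Fract a b" "b \<noteq> 0" by (cases r)
  then have "a \<noteq> 0" using r(1) by (auto simp: Zero_fract_def eq_fract)
  have den: "to_fract (D * a) * \<theta> \<in> range to_fract" if "\<theta> \<in> multipliers P Q" for \<theta>
  proof -
    have "(\<lambda>k. \<theta> * hel r m k) \<in> Q" using that r(2) by (auto simp: multipliers_def)
    from D(2)[OF this, of m] have "to_fract D * (\<theta> * r) \<in> range to_fract" by (simp add: hel_def)
    then obtain p where p: "to_fract D * (\<theta> * r) = to_fract p" by blast
    have "to_fract b \<noteq> 0" using ab(2) by simp
    then have "to_fract (D * a) * \<theta> = to_fract D * (\<theta> * r) * to_fract b"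
      by (simp add: ab(1) Fract_conv_to_fract)
    also have "\<dots> = to_fract (p * b)" by (simp add: p)
    finally show ?thesis by (simp only: rangeI)
  qed
  have "D * a \<noteq> 0" using D(1) \<open>a \<noteq> 0\<close> by simp
  then show thesis using den by (rule that)
qed

theorem proposition3p23:
  fixes \<alpha> :: "'k::field_char_0" and P Q :: "'k qgr set"
  assumes alg_closed: "\<forall>p :: 'k poly. degree p > 0 \<longrightarrow> (\<exists>x. poly p x = 0)"
    and P: "rank_one_proj \<alpha> P" and Q: "rank_one_proj \<alpha> Q"
  shows "(\<forall>\<phi>\<in>HomGr \<alpha> P Q. \<exists>\<theta>. \<forall>u\<in>P. \<phi> u = qmul (hel \<theta> 0) u)
    \<and> (\<exists>\<phi>0\<in>HomGr \<alpha> P Q.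
         (\<forall>c. (\<lambda>u. qmul (hel (to_fract c) 0) (\<phi>0 u)) \<in> HomGr \<alpha> P Q)
       \<and> (\<forall>\<phi>\<in>HomGr \<alpha> P Q. \<exists>!c. \<forall>u\<in>P. \<phi> u = qmul (hel (to_fract c) 0) (\<phi>0 u)))"
proof -
  have P': "grsub \<alpha> P" "P \<noteq> {0}" "fin_gen \<alpha> P" and Q': "grsub \<alpha> Q" "Q \<noteq> {0}" "fin_gen \<alpha> Q"
    using P Q by (auto simp: rank_one_proj_def)
  obtain u0 where u0: "u0 \<in> P" "u0 \<noteq> 0" using P' by (auto simp: grsub_def)
  obtain \<theta>1 where \<theta>1: "\<theta>1 \<in> multipliers P Q" "\<theta>1 \<noteq> 0"
    using multipliers_nonzero[OF P'(1,3) Q'(1,2)] by blast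
  obtain D where D: "D \<noteq> 0" "\<And>\<theta>. \<theta> \<in> multipliers P Q \<Longrightarrow> to_fract D * \<theta> \<in> range to_fract"
    using multipliers_bounded_denominators[OF P'(1,2) Q'(1,3)] by blast
  obtain \<theta>0 where \<theta>0: "\<theta>0 \<in> multipliers P Q" "\<theta>0 \<noteq> 0"
    and generates: "\<And>\<theta>. \<theta> \<in> multipliers P Q \<Longrightarrow> \<exists>c. \<theta> = to_fract c * \<theta>0"
    using fractional_ideal_principal[OF multipliers_add[OF Q'(1)] multipliers_poly_mult[OF Q'(1)] \<theta>1 D]
    by blast
  define \<phi>0 where "\<phi>0 = qmul (hel \<theta>0 0)"
  have scaled: "qmul (hel (to_fract c) 0) (\<phi>0 u) = qmul (hel (to_fract c * \<theta>0) 0) u" for c u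
    by (simp add: \<phi>0_def qmul_hel_0_left mult.assoc)
  have "\<exists>!c. \<forall>u\<in>P. \<phi> u = qmul (hel (to_fract c) 0) (\<phi>0 u)" if \<phi>: "\<phi> \<in> HomGr \<alpha> P Q" for \<phi>
  proof -
    obtain \<theta> where \<theta>: "\<theta> \<in> multipliers P Q" "\<And>u. u \<in> P \<Longrightarrow> \<phi> u = qmul (hel \<theta> 0) u"
      using HomGr_is_scaling[OF P'(1,2) \<phi>] by blast
    have "(\<forall>u\<in>P. \<phi> u = qmul (hel (to_fract c) 0) (\<phi>0 u)) \<longleftrightarrow> to_fract c * \<theta>0 = \<theta>" for c
      using scaling_eq_on_iff[OF u0] by (simp add: \<theta>(2) scaled eq_commute)
    moreover obtain c where "\<theta> = to_fract c * \<theta>0" using generates[OF \<theta>(1)] by blast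
    ultimately show ?thesis using \<theta>0(2) by auto
  qed
  moreover have "\<phi>0 \<in> HomGr \<alpha> P Q" unfolding \<phi>0_def by (rule scaling_in_HomGr[OF \<theta>0(1)])
  moreover have "(\<lambda>u. qmul (hel (to_fract c) 0) (\<phi>0 u)) \<in> HomGr \<alpha> P Q" for c
    unfolding scaled by (rule scaling_in_HomGr[OF multipliers_poly_mult[OF Q'(1) \<theta>0(1)]])
  moreover have "\<exists>\<theta>. \<forall>u\<in>P. \<phi> u = qmul (hel \<theta> 0) u" if \<phi>: "\<phi> \<in> HomGr \<alpha> P Q" for \<phi>
  proof -
    obtain \<theta> where "\<theta> \<in> multipliers P Q" "\<And>u. u \<in> P \<Longrightarrow> \<phi> u = qmul (hel \<theta> 0) u"
      using HomGr_is_scaling[OF P'(1,2) \<phi>] by blast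
    then show ?thesis by blast
  qed
  ultimately show ?thesis by (intro conjI ballI bexI[of _ \<phi>0] allI) simp_all
qed

end
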